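(* For $n\ge 4$, the network space $\mathfrak S_n$ is a connected simplicial complex of dimension $n(n-3)/2-1$, whose $k$-simplices correspond bijectively to the split systems consisting of $k+1$ nontrivial splits that are circular with respect to some circular ordering of $X$ (equivalently, to labeled $n$-gons with $k+1$ diagonals, two labeled polygons being identified when they represent the same split system).
   Context: $X$ is a set of $n\ge4$ labels. A split of $X$ is an unordered partition $\{A,B\}$ of $X$ into two nonempty sets; it is trivial if one part has one element. A circular ordering of $X$ is a cyclic arrangement $\pi=(x_1,\dots,x_n)$ up to rotation and reflection; a split is circular w.r.t. $\pi$ if it has the form $\{\{x_{i+1},\dots,x_j\},X\setminus\{x_{i+1},\dots,x_j\}\}$ (indices mod $n$); it then corresponds to a diagonal of a regular $n$-gon whose edges are labeled cyclically by $\pi$. Let $\delta=2^{n-1}-n-1$ be the number of nontrivial splits and give $\mathbb R^\delta$ coordinates indexed by nontrivial splits. For each circular ordering $\pi$ let $O_\pi\subset\mathbb R^\delta$ be the set of nonnegative vectors whose support consists of splits circular w.r.t. $\pi$. The space of circular split networks is $\mathrm{CSN}_n=\bigcup_\pi O_\pi$, and the network space is $\mathfrak S_n=\{x\in \mathrm{CSN}_n:\sum x_s=1\}=\bigcup_\pi \Delta_\pi$ where $\Delta_\pi=O_\pi\cap\{\sum x_s=1\}$ is a simplex (a chamber); faces of chambers are the sets of points whose support lies in a given subsystem. *)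

theory Defs
  imports "HOL-Analysis.Analysis"
begin

text \<open>The label set X is the universe of a finite type 'a (so n = CARD('a)).
  A split is represented as the unordered pair {A, X - A} of its parts.\<close>

definition is_split :: "'a set \<Rightarrow> 'a set set \<Rightarrow> bool" where
  "is_split X s \<longleftrightarrow> (\<exists>A. A \<noteq> {} \<and> A \<subset> X \<and> s = {A, X - A})"

definition trivial_split :: "'a set \<Rightarrow> 'a set set \<Rightarrow> bool" where
  "trivial_split X s \<longleftrightarrow> is_split X s \<and> (\<exists>A\<in>s. card A = 1)"

definition nontrivial_split :: "'a set \<Rightarrow> 'a set set \<Rightarrow> bool" where
  "nontrivial_split X s \<longleftrightarrow> is_split X s \<and> \<not> trivial_split X s"

text \<open>A circular ordering (x_1,...,x_n) of X is represented by a list enumerating X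
  without repetition; rotations/reflections give the same circular splits.\<close>

definition circular_ordering :: "'a set \<Rightarrow> 'a list \<Rightarrow> bool" where
  "circular_ordering X xs \<longleftrightarrow> distinct xs \<and> set xs = X"

definition circular_wrt :: "'a set \<Rightarrow> 'a list \<Rightarrow> 'a set set \<Rightarrow> bool" where
  "circular_wrt X xs s \<longleftrightarrow> is_split X s \<and>
     (\<exists>i m. let A = {xs ! ((i + t) mod length xs) | t. t < m} in s = {A, X - A})"

text \<open>Coordinates are indexed by splits; vectors of the ambient space R^delta are
  those supported on nontrivial splits of X = UNIV.\<close>

definition chamber_cone :: "'a list \<Rightarrow> (real ^ ('a::finite set set)) set" where
  "chamber_cone xs = {x. (\<forall>s. 0 \<le> x $ s) \<and>
      (\<forall>s. x $ s \<noteq> 0 \<longrightarrow> nontrivial_split UNIV s \<and> circular_wrt UNIV xs s)}"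

definition CSN :: "(real ^ ('a::finite set set)) set" where
  "CSN = (\<Union>xs\<in>{xs. circular_ordering UNIV xs}. chamber_cone xs)"

definition network_space :: "(real ^ ('a::finite set set)) set" where
  "network_space = {x \<in> CSN. (\<Sum>s\<in>{s. nontrivial_split UNIV s}. x $ s) = 1}"

text \<open>Split systems of nontrivial splits circular w.r.t. some circular ordering
  (including the empty system, which gives the empty face).\<close>

definition circular_split_system :: "('a::finite) set set set \<Rightarrow> bool" where
  "circular_split_system S \<longleftrightarrow> (\<forall>s\<in>S. nontrivial_split UNIV s) \<and>
     (\<exists>xs. circular_ordering UNIV xs \<and> (\<forall>s\<in>S. circular_wrt UNIV xs s))"

definition split_cell :: "('a::finite) set set set \<Rightarrow> (real ^ ('a set set)) set" where
  "split_cell S = convex hull ((\<lambda>s. axis s 1) ` S)"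

definition network_complex :: "(real ^ ('a::finite set set)) set set" where
  "network_complex = split_cell ` {S. circular_split_system S}"

end

theory Submission
  imports Defs
begin

(*
  The chamber of a circular ordering \<pi> is the standard simplex spanned by the coordinate
  vectors of the nontrivial splits circular with respect to \<pi>. Convex hulls of coordinate
  vectors are affinely independent simplices whose faces and pairwise intersections are again
  such hulls, so the cells of circular split systems form a simplicial complex covering the
  network space, and a system of k + 1 splits gives a k-simplex.

  A nontrivial circular split is determined by its part avoiding x\<^sub>1, a block of consecutive
  positions {j..k} with 2 \<le> k - j + 1 \<le> n - 2. These blocks are the diagonals of the n-gon,
  so every chamber has n(n - 3)/2 vertices, which bounds the size of every circular split system.

  For connectedness fix labels a \<noteq> b. Every chamber contains the vertex {a, y} for a neighbour
  y of a, and the ordering (b, a, y, ...) gives a chamber containing both {a, y} and {a, b};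
  so every chamber meets a chamber through the common vertex {a, b}.
*)

section \<open>Coordinate simplices\<close>

lemma convex_hull_axis:
  fixes S :: "'i::finite set"
  shows "convex hull ((\<lambda>i. axis i 1) ` S) =
    {x :: real^'i. (\<forall>i. 0 \<le> x$i) \<and> (\<forall>i. x$i \<noteq> 0 \<longrightarrow> i \<in> S) \<and> sum (($) x) S = 1}"
    (is "_ = ?\<Delta>")
proof
  have "(\<lambda>i. axis i 1) ` S \<subseteq> ?\<Delta>"
    by (auto simp: axis_def sum.delta split: if_splits)
  moreover have "convex ?\<Delta>"
  proof (rule convexI)
    fix x y :: "real^'i" and u v :: real
    assume x: "x \<in> ?\<Delta>" and y: "y \<in> ?\<Delta>" and uv: "0 \<le> u" "0 \<le> v" "u + v = 1"
    have "(u *\<^sub>R x + v *\<^sub>R y) $ i = 0" if "i \<notin> S" for i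
    proof -
      have "x $ i = 0" "y $ i = 0"
        using x y that by blast+
      then show ?thesis by simp
    qed
    with x y uv show "u *\<^sub>R x + v *\<^sub>R y \<in> ?\<Delta>"
      by (auto simp: sum.distrib sum_distrib_left[symmetric])
  qed
  ultimately show "convex hull ((\<lambda>i. axis i 1) ` S) \<subseteq> ?\<Delta>"
    by (rule hull_minimal)
next
  show "?\<Delta> \<subseteq> convex hull ((\<lambda>i. axis i 1) ` S)"
  proof
    fix x assume x: "x \<in> ?\<Delta>"
    then have "x = (\<Sum>i\<in>S. x$i *\<^sub>R axis i 1)"
      by (auto simp: vec_eq_iff sum_component axis_def if_distrib[of "\<lambda>z. _ * z"] cong: if_cong)
    also have "\<dots> \<in> convex hull ((\<lambda>i. axis i 1) ` S)"
      using x by (intro convex_sum convex_convex_hull) (auto intro: hull_inc)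
    finally show "x \<in> convex hull ((\<lambda>i. axis i 1) ` S)" .
  qed
qed

lemma affine_independent_axis: "\<not> affine_dependent ((\<lambda>i. axis i (1::real)) ` (S :: 'i::finite set))"
proof
  assume "affine_dependent ((\<lambda>i. axis i (1::real)) ` S)"
  then have "dependent ((\<lambda>i. axis i (1::real)) ` S)"
    by (rule affine_dependent_imp_dependent)
  moreover have "(\<lambda>i. axis i (1::real)) ` S \<subseteq> Basis"
    by auto
  ultimately show False
    using independent_Basis dependent_mono by blast
qed

lemma simplex_convex_hull_axis:
  "(int (card S) - 1) simplex convex hull ((\<lambda>i. axis i (1::real)) ` (S :: 'i::finite set))"
  by (rule simplex_convex_hull)
    (simp add: affine_independent_axis card_image inj_on_def axis_eq_axis)

lemma convex_hull_axis_Int: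
  fixes S T :: "'i::finite set"
  shows "convex hull ((\<lambda>i. axis i (1::real)) ` S) \<inter> convex hull ((\<lambda>i. axis i 1) ` T)
    = convex hull ((\<lambda>i. axis i 1) ` (S \<inter> T))"
proof -
  have "sum (($) x) S = sum (($) x) (S \<inter> T)" "sum (($) x) T = sum (($) x) (S \<inter> T)"
    if "\<forall>i. x$i \<noteq> 0 \<longrightarrow> i \<in> S \<inter> T" for x :: "real^'i"
    using that by (auto intro: sum.mono_neutral_right)
  then show ?thesis
    unfolding convex_hull_axis by auto
qed

lemma convex_hull_axis_support:
  "{i. \<exists>x \<in> convex hull ((\<lambda>i. axis i (1::real)) ` S). x$i \<noteq> 0} = (S :: 'i::finite set)"
proof -
  have "\<exists>x \<in> convex hull ((\<lambda>i. axis i (1::real)) ` S). x$i \<noteq> 0" if "i \<in> S" for i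
    using that by (intro bexI[of _ "axis i 1"] hull_inc) auto
  then show ?thesis
    unfolding convex_hull_axis by auto
qed

lemma inj_convex_hull_axis: "inj (\<lambda>S :: 'i::finite set. convex hull ((\<lambda>i. axis i (1::real)) ` S))"
proof (rule injI)
  fix S T :: "'i set"
  assume eq: "convex hull ((\<lambda>i. axis i (1::real)) ` S) = convex hull ((\<lambda>i. axis i 1) ` T)"
  have "S = {i. \<exists>x \<in> convex hull ((\<lambda>i. axis i (1::real)) ` S). x$i \<noteq> 0}"
    by (rule convex_hull_axis_support[symmetric])
  also have "\<dots> = T"
    unfolding eq by (rule convex_hull_axis_support)
  finally show "S = T" .
qed

lemma face_of_convex_hull_axis:
  "F face_of convex hull ((\<lambda>i. axis i (1::real)) ` S) \<longleftrightarrow>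
    (\<exists>T \<subseteq> (S :: 'i::finite set). F = convex hull ((\<lambda>i. axis i 1) ` T))"
  unfolding face_of_convex_hull_affine_independent[OF affine_independent_axis]
  by (auto simp: subset_image_iff)

section \<open>Cyclic intervals\<close>

definition cyclic_interval :: "nat \<Rightarrow> nat \<Rightarrow> nat \<Rightarrow> nat set" where
  "cyclic_interval n i m = {(i + t) mod n | t. t < m}"

lemma cyclic_interval_mod: "cyclic_interval n (i mod n) m = cyclic_interval n i m"
  by (simp add: cyclic_interval_def mod_add_left_eq)

lemma cyclic_interval_subset: "0 < n \<Longrightarrow> cyclic_interval n i m \<subseteq> {..<n}"
  by (auto simp: cyclic_interval_def)

lemma cyclic_interval_eq_atLeastLessThan:
  assumes "i + m \<le> n"
  shows "cyclic_interval n i m = {i..<i + m}"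
proof (intro set_eqI iffI)
  fix p assume "p \<in> cyclic_interval n i m"
  then show "p \<in> {i..<i + m}"
    using assms by (auto simp: cyclic_interval_def)
next
  fix p assume "p \<in> {i..<i + m}"
  then have "p = (i + (p - i)) mod n" "p - i < m"
    using assms by auto
  then show "p \<in> cyclic_interval n i m"
    unfolding cyclic_interval_def by blast
qed

lemma cyclic_interval_wrap:
  assumes "i < n" "n < i + m" "m \<le> n"
  shows "cyclic_interval n i m = {i..<n} \<union> {..<i + m - n}"
proof (intro set_eqI iffI)
  fix p assume "p \<in> cyclic_interval n i m"
  then obtain t where "t < m" "p = (i + t) mod n"
    unfolding cyclic_interval_def by blast
  then show "p \<in> {i..<n} \<union> {..<i + m - n}"
    using assms by (cases "i + t < n") (auto simp: mod_if le_mod_geq)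
next
  fix p assume p: "p \<in> {i..<n} \<union> {..<i + m - n}"
  show "p \<in> cyclic_interval n i m"
  proof (cases "i \<le> p")
    case True
    then have "p = (i + (p - i)) mod n" "p - i < m"
      using p assms by auto
    then show ?thesis
      unfolding cyclic_interval_def by blast
  next
    case False
    then have "p = (i + (p + n - i)) mod n" "p + n - i < m"
      using p assms by (auto simp: le_mod_geq)
    then show ?thesis
      unfolding cyclic_interval_def by blast
  qed
qed

lemma cyclic_interval_full:
  assumes "0 < n" "n \<le> m"
  shows "cyclic_interval n i m = {..<n}"
proof -
  have "{..<n} = cyclic_interval n (i mod n) n"
    using cyclic_interval_wrap[of "i mod n" n n] cyclic_interval_eq_atLeastLessThan[of 0 n n]
      assms mod_less_divisor[OF assms(1), of i]
    by (cases "i mod n = 0") auto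
  also have "\<dots> = cyclic_interval n i n"
    by (rule cyclic_interval_mod)
  also have "\<dots> \<subseteq> cyclic_interval n i m"
    using assms(2) unfolding cyclic_interval_def by force
  finally show ?thesis
    using cyclic_interval_subset[OF assms(1)] by blast
qed

lemma card_cyclic_interval:
  assumes "0 < n" "m \<le> n"
  shows "card (cyclic_interval n i m) = m"
proof (cases "i mod n + m \<le> n")
  case True
  then show ?thesis
    by (metis cyclic_interval_eq_atLeastLessThan cyclic_interval_mod card_atLeastLessThan
        add_diff_cancel_left')
next
  case False
  then have "card (cyclic_interval n (i mod n) m) = card ({i mod n..<n} \<union> {..<i mod n + m - n})"
    using assms by (subst cyclic_interval_wrap) auto
  also have "\<dots> = m"
    using False assms by (subst card_Un_disjoint) auto
  finally show ?thesis
    by (simp add: cyclic_interval_mod)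
qed

lemma cyclic_interval_or_complement_atLeastAtMost:
  assumes "0 < m" "m < n"
  obtains j k where "0 < j" "j \<le> k" "k < n"
    "cyclic_interval n i m = {j..k} \<or> {..<n} - cyclic_interval n i m = {j..k}"
proof -
  define i' where "i' = i mod n"
  have i': "i' < n" "cyclic_interval n i m = cyclic_interval n i' m"
    using assms by (auto simp: i'_def cyclic_interval_mod)
  consider "i' = 0" | "0 < i'" "i' + m \<le> n" | "n < i' + m"
    by linarith
  then show ?thesis
  proof cases
    case 1
    then have "{..<n} - cyclic_interval n i m = {m..n - 1}"
      using assms i' cyclic_interval_eq_atLeastLessThan[of 0 m n] by auto
    then show ?thesis
      using assms by (intro that[of m "n - 1"]) auto
  next
    case 2
    then have "cyclic_interval n i m = {i'..i' + m - 1}"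
      using assms i' cyclic_interval_eq_atLeastLessThan[of i' m n] by auto
    then show ?thesis
      using assms 2 by (intro that[of i' "i' + m - 1"]) auto
  next
    case 3
    then have "{..<n} - cyclic_interval n i m = {i' + m - n..i' - 1}"
      using assms i' cyclic_interval_wrap[of i' n m] by auto
    then show ?thesis
      using assms 3 i' by (intro that[of "i' + m - n" "i' - 1"]) auto
  qed
qed

lemma cyclic_interval_two: "cyclic_interval n i 2 = {i mod n, Suc i mod n}"
proof -
  have "{t. t < (2::nat)} = {0, 1}"
    by auto
  then show ?thesis
    by (simp add: cyclic_interval_def setcompr_eq_image)
qed

lemma card_pos_increasing_pairs: "2 * card {(j, k). 0 < j \<and> j < k \<and> k < n} = (n - 1) * (n - 2)"
proof (induction n)
  case 0
  then show ?case by simp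
next
  case (Suc n)
  have split: "{(j, k). 0 < j \<and> j < k \<and> k < Suc n} =
      {(j, k). 0 < j \<and> j < k \<and> k < n} \<union> (\<lambda>j. (j, n)) ` {0<..<n}"
    by auto
  have "finite {(j, k). 0 < j \<and> j < k \<and> k < n}"
    by (rule finite_subset[of _ "{..<n} \<times> {..<n}"]) auto
  then have "card {(j, k). 0 < j \<and> j < k \<and> k < Suc n} =
      card {(j, k). 0 < j \<and> j < k \<and> k < n} + (n - 1)"
    unfolding split by (subst card_Un_disjoint) (auto simp: card_image inj_on_def)
  with Suc.IH show ?case
    by (cases n) (auto simp: algebra_simps)
qed

section \<open>Circular splits of a circular ordering\<close>

definition split_of :: "'a set \<Rightarrow> 'a set set" where
  "split_of A = {A, UNIV - A}"

lemma split_of_Compl: "split_of (UNIV - A) = split_of A"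
  by (auto simp: split_of_def)

lemma split_of_eq_avoiding:
  assumes "split_of A = split_of B" "x \<notin> A" "x \<notin> B"
  shows "A = B"
  using assms by (auto simp: split_of_def doubleton_eq_iff)

lemma nontrivial_split_split_of:
  "nontrivial_split UNIV (split_of A) \<longleftrightarrow> 2 \<le> card A \<and> 2 \<le> card (UNIV - (A :: 'a::finite set))"
proof -
  have card_ge_2: "2 \<le> card B \<longleftrightarrow> B \<noteq> {} \<and> card B \<noteq> 1" for B :: "'a set"
    using card_0_eq[of B] by (cases "card B") auto
  have "is_split UNIV {A, UNIV - A} \<longleftrightarrow> A \<noteq> {} \<and> UNIV - A \<noteq> {}"
    by (auto simp: is_split_def doubleton_eq_iff)
  then show ?thesis
    unfolding nontrivial_split_def trivial_split_def split_of_def card_ge_2 by auto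
qed

definition circular_splits :: "'a::finite list \<Rightarrow> 'a set set set" where
  "circular_splits xs = {s. nontrivial_split UNIV s \<and> circular_wrt UNIV xs s}"

text \<open>The pair (j, k) stands for the split whose part avoiding the label at position 0 occupies
  positions j..k, i.e. for a diagonal of the labelled n-gon; (1, n - 1) would be a trivial split.\<close>

definition diagonal_pairs :: "nat \<Rightarrow> (nat \<times> nat) set" where
  "diagonal_pairs n = {(j, k). 0 < j \<and> j < k \<and> k < n} - {(1, n - 1)}"

lemma card_diagonal_pairs:
  assumes "3 \<le> n"
  shows "2 * card (diagonal_pairs n) = n * (n - 3)"
proof -
  let ?P = "{(j, k). 0 < j \<and> j < k \<and> k < n}"
  have "finite ?P"
    by (rule finite_subset[of _ "{..<n} \<times> {..<n}"]) auto
  moreover have "(1, n - 1) \<in> ?P"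
    using assms by auto
  ultimately have "card (diagonal_pairs n) = card ?P - 1" "0 < card ?P"
    by (auto simp: diagonal_pairs_def card_gt_0_iff)
  moreover obtain m where "n = m + 3"
    using assms by (metis add.commute le_iff_add)
  ultimately show ?thesis
    using card_pos_increasing_pairs[of n] by (simp add: algebra_simps)
qed

lemma circular_wrt_iff:
  "circular_wrt UNIV xs s \<longleftrightarrow>
    is_split UNIV s \<and> (\<exists>i m. s = split_of ((!) xs ` cyclic_interval (length xs) i m))"
proof -
  have "{xs ! ((i + t) mod length xs) | t. t < m} = (!) xs ` cyclic_interval (length xs) i m" for i m
    by (auto simp: cyclic_interval_def)
  then show ?thesis
    by (simp add: circular_wrt_def split_of_def Let_def)
qed

context
  fixes xs :: "'a::finite list"
  assumes ordering: "circular_ordering UNIV xs"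
begin

lemma length_circular_ordering: "length xs = CARD('a)"
  using ordering distinct_card unfolding circular_ordering_def by metis

lemma inj_on_nth_circular_ordering: "inj_on ((!) xs) {..<length xs}"
  using ordering unfolding circular_ordering_def by (intro inj_on_nth) auto

lemma card_nth_image:
  "I \<subseteq> {..<length xs} \<Longrightarrow> card ((!) xs ` I) = card I"
  by (meson card_image inj_on_nth_circular_ordering inj_on_subset)

lemma Compl_nth_image:
  assumes "I \<subseteq> {..<length xs}"
  shows "UNIV - (!) xs ` I = (!) xs ` ({..<length xs} - I)"
proof -
  have "(!) xs ` {..<length xs} = UNIV"
    using ordering unfolding circular_ordering_def by (auto simp: set_conv_nth)
  then show ?thesis
    using assms inj_on_image_set_diff[OF inj_on_nth_circular_ordering] by (metis Diff_subset)
qed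

lemma split_of_cyclic_interval_in_circular_splits:
  assumes "2 \<le> m" "m + 2 \<le> length xs"
  shows "split_of ((!) xs ` cyclic_interval (length xs) i m) \<in> circular_splits xs"
proof -
  let ?C = "cyclic_interval (length xs) i m"
  have sub: "?C \<subseteq> {..<length xs}"
    using assms by (intro cyclic_interval_subset) auto
  have "card ?C = m"
    using assms by (intro card_cyclic_interval) auto
  then have "card ((!) xs ` ?C) = m" "card (UNIV - (!) xs ` ?C) = length xs - m"
    using sub finite_subset[OF sub] by (simp_all add: Compl_nth_image card_nth_image card_Diff_subset)
  then have "nontrivial_split UNIV (split_of ((!) xs ` ?C))"
    using assms by (simp add: nontrivial_split_split_of)
  then show ?thesis
    unfolding circular_splits_def circular_wrt_iff nontrivial_split_def by blast
qed

lemma nontrivial_split_cyclic_interval_length: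
  assumes "nontrivial_split UNIV (split_of ((!) xs ` cyclic_interval (length xs) i m))"
  shows "0 < m" "m < length xs"
proof -
  let ?n = "length xs" and ?C = "cyclic_interval (length xs) i m"
  have C: "2 \<le> card ((!) xs ` ?C)" "2 \<le> card (UNIV - (!) xs ` ?C)"
    using assms unfolding nontrivial_split_split_of by auto
  show "0 < m"
    using C(1) by (cases "m = 0") (auto simp: cyclic_interval_def)
  show "m < ?n"
  proof (rule ccontr)
    assume "\<not> m < ?n"
    then have "?C = {..<?n}"
      by (simp add: cyclic_interval_full length_circular_ordering)
    then have "UNIV - (!) xs ` ?C = {}"
      using Compl_nth_image[of "{..<?n}"] by simp
    then show False
      using C(2) by (metis card.empty not_numeral_le_zero)
  qed
qed

lemma circular_split_obtain_diagonal:
  assumes "s \<in> circular_splits xs"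
  obtains j k where "(j, k) \<in> diagonal_pairs (length xs)" "s = split_of ((!) xs ` {j..k})"
proof -
  obtain i m where nontrivial: "nontrivial_split UNIV s"
    and s: "s = split_of ((!) xs ` cyclic_interval (length xs) i m)"
    using assms unfolding circular_splits_def circular_wrt_iff by auto
  let ?n = "length xs" and ?C = "cyclic_interval (length xs) i m"
  have n: "0 < ?n"
    by (simp add: length_circular_ordering)
  have "0 < m" "m < ?n"
    using nontrivial_split_cyclic_interval_length nontrivial unfolding s by auto
  then obtain j k where jk: "0 < j" "j \<le> k" "k < ?n" "?C = {j..k} \<or> {..<?n} - ?C = {j..k}"
    by (rule cyclic_interval_or_complement_atLeastAtMost)
  have "(!) xs ` {j..k} = (!) xs ` ?C \<or> (!) xs ` {j..k} = UNIV - (!) xs ` ?C"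
    using jk(4) Compl_nth_image[OF cyclic_interval_subset[OF n]] by auto
  then have s_jk: "s = split_of ((!) xs ` {j..k})"
    by (metis s split_of_Compl)
  moreover have card: "card ((!) xs ` {j..k}) = Suc k - j"
    using jk by (subst card_nth_image) auto
  moreover have "card (UNIV - (!) xs ` {j..k}) = ?n - (Suc k - j)"
    using card by (simp add: card_Diff_subset length_circular_ordering)
  ultimately have "2 \<le> Suc k - j" "2 \<le> ?n - (Suc k - j)"
    using nontrivial by (simp_all add: nontrivial_split_split_of)
  then have "j < k" "(j, k) \<noteq> (1, ?n - 1)"
    by auto
  with jk(1,3) have "(j, k) \<in> diagonal_pairs ?n"
    by (simp add: diagonal_pairs_def)
  then show ?thesis
    using s_jk by (rule that)
qed

lemma diagonal_split_in_circular_splits: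
  assumes "(j, k) \<in> diagonal_pairs (length xs)"
  shows "split_of ((!) xs ` {j..k}) \<in> circular_splits xs"
proof -
  have bounds: "0 < j" "j < k" "k < length xs" "(j, k) \<noteq> (1, length xs - 1)"
    using assms by (auto simp: diagonal_pairs_def)
  then have "{j..k} = cyclic_interval (length xs) j (Suc k - j)"
    by (simp add: cyclic_interval_eq_atLeastLessThan atLeastLessThanSuc_atLeastAtMost)
  moreover have "2 \<le> Suc k - j" "Suc k - j + 2 \<le> length xs"
    using bounds by auto
  ultimately show ?thesis
    using split_of_cyclic_interval_in_circular_splits by simp
qed

lemma circular_splits_eq_diagonals:
  "circular_splits xs = (\<lambda>(j, k). split_of ((!) xs ` {j..k})) ` diagonal_pairs (length xs)"
proof (intro equalityI subsetI)
  fix s assume "s \<in> circular_splits xs"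
  then obtain j k where "(j, k) \<in> diagonal_pairs (length xs)" "s = split_of ((!) xs ` {j..k})"
    by (rule circular_split_obtain_diagonal)
  then show "s \<in> (\<lambda>(j, k). split_of ((!) xs ` {j..k})) ` diagonal_pairs (length xs)"
    by auto
qed (auto intro: diagonal_split_in_circular_splits)

lemma inj_on_diagonal_split:
  "inj_on (\<lambda>(j, k). split_of ((!) xs ` {j..k})) (diagonal_pairs (length xs))"
proof (intro inj_onI, clarsimp)
  fix j k j' k'
  assume jk: "(j, k) \<in> diagonal_pairs (length xs)" "(j', k') \<in> diagonal_pairs (length xs)"
    and eq: "split_of ((!) xs ` {j..k}) = split_of ((!) xs ` {j'..k'})"
  have sub: "{j..k} \<subseteq> {..<length xs}" "{j'..k'} \<subseteq> {..<length xs}" "{0} \<subseteq> {..<length xs}"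
    using jk by (auto simp: diagonal_pairs_def)
  have "xs ! 0 \<notin> (!) xs ` {j..k}" "xs ! 0 \<notin> (!) xs ` {j'..k'}"
    using jk sub inj_on_image_mem_iff[OF inj_on_nth_circular_ordering]
    by (auto simp: diagonal_pairs_def)
  then have "(!) xs ` {j..k} = (!) xs ` {j'..k'}"
    using eq by (rule split_of_eq_avoiding[rotated])
  then have "{j..k} = {j'..k'}"
    using sub inj_on_image_eq_iff[OF inj_on_nth_circular_ordering] by metis
  then show "j = j' \<and> k = k'"
    using jk by (auto simp: diagonal_pairs_def)
qed

lemma card_circular_splits:
  assumes "3 \<le> CARD('a)"
  shows "2 * card (circular_splits xs) = CARD('a) * (CARD('a) - 3)"
proof -
  have "card (circular_splits xs) = card (diagonal_pairs (length xs))"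
    unfolding circular_splits_eq_diagonals by (rule card_image[OF inj_on_diagonal_split])
  then show ?thesis
    using card_diagonal_pairs[of "length xs"] assms by (simp add: length_circular_ordering)
qed

end

section \<open>The network complex\<close>

lemma simplex_split_cell_iff: "k simplex split_cell S \<longleftrightarrow> k = int (card S) - 1"
  using aff_dim_simplex simplex_convex_hull_axis unfolding split_cell_def by metis

lemma split_cell_mono: "S \<subseteq> T \<Longrightarrow> split_cell S \<subseteq> split_cell T"
  unfolding split_cell_def by (intro hull_mono image_mono)

lemma split_cell_Int:
  fixes S T :: "'a::finite set set set"
  shows "split_cell S \<inter> split_cell T = split_cell (S \<inter> T)"
  unfolding split_cell_def by (rule convex_hull_axis_Int)

lemma face_of_split_cell_iff: "F face_of split_cell S \<longleftrightarrow> (\<exists>T \<subseteq> S. F = split_cell T)"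
  unfolding split_cell_def by (rule face_of_convex_hull_axis)

lemma axis_in_split_cell: "s \<in> S \<Longrightarrow> axis s 1 \<in> split_cell S"
  unfolding split_cell_def by (intro hull_inc imageI)

lemma circular_split_system_iff:
  "circular_split_system S \<longleftrightarrow> (\<exists>xs. circular_ordering UNIV xs \<and> S \<subseteq> circular_splits xs)"
  unfolding circular_split_system_def circular_splits_def by blast

lemma circular_split_system_subset:
  "circular_split_system S \<Longrightarrow> T \<subseteq> S \<Longrightarrow> circular_split_system T"
  unfolding circular_split_system_def by blast

lemma circular_split_system_circular_splits:
  "circular_ordering UNIV xs \<Longrightarrow> circular_split_system (circular_splits xs)"
  unfolding circular_split_system_iff by blast

lemma ex_circular_ordering: "\<exists>xs. circular_ordering (UNIV :: 'a::finite set) xs"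
  unfolding circular_ordering_def using finite_distinct_list[of "UNIV :: 'a set"] by auto

lemma chamber_eq_split_cell:
  "{x \<in> chamber_cone xs. (\<Sum>s\<in>{s. nontrivial_split UNIV s}. x $ s) = 1} = split_cell (circular_splits xs)"
proof -
  have "(\<Sum>s\<in>{s. nontrivial_split UNIV s}. x $ s) = sum (($) x) (circular_splits xs)"
    if "\<forall>s. x $ s \<noteq> 0 \<longrightarrow> s \<in> circular_splits xs" for x :: "real ^ 'a set set"
    using that by (intro sum.mono_neutral_right) (auto simp: circular_splits_def)
  then show ?thesis
    unfolding split_cell_def convex_hull_axis chamber_cone_def circular_splits_def
    by auto
qed

lemma network_space_eq_Union_chambers:
  "network_space = (\<Union>xs\<in>{xs. circular_ordering UNIV xs}. split_cell (circular_splits xs))"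
  unfolding network_space_def CSN_def chamber_eq_split_cell[symmetric] by blast

lemma Union_network_complex: "\<Union> network_complex = network_space"
  unfolding network_space_eq_Union_chambers network_complex_def circular_split_system_iff
  using split_cell_mono by blast

lemma simplicial_complex_network_complex:
  "simplicial_complex (network_complex :: (real ^ 'a::finite set set) set set)"
  unfolding simplicial_complex_def
proof (intro conjI allI impI ballI)
  show "finite network_complex"
    unfolding network_complex_def by simp
next
  fix \<sigma> assume "\<sigma> \<in> network_complex"
  then show "\<exists>k. k simplex \<sigma>"
    by (auto simp: network_complex_def simplex_split_cell_iff)
next
  fix \<sigma> F assume "\<sigma> \<in> network_complex \<and> F face_of \<sigma>"
  then obtain S where S: "circular_split_system S" "F face_of split_cell S"
    unfolding network_complex_def by blast
  then obtain T where "T \<subseteq> S" "F = split_cell T"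
    unfolding face_of_split_cell_iff by blast
  with S(1) show "F \<in> network_complex"
    unfolding network_complex_def using circular_split_system_subset by blast
next
  fix \<sigma> \<tau> :: "(real ^ 'a set set) set" assume "\<sigma> \<in> network_complex \<and> \<tau> \<in> network_complex"
  then obtain S T where "\<sigma> = split_cell S" "\<tau> = split_cell T"
    unfolding network_complex_def by blast
  moreover have "split_cell (S \<inter> T) face_of split_cell S"
    unfolding face_of_split_cell_iff by blast
  ultimately show "(\<sigma> \<inter> \<tau>) face_of \<sigma>"
    by (simp add: split_cell_Int)
qed

lemma bij_betw_split_cell_simplices:
  "bij_betw split_cell {S. circular_split_system S \<and> int (card S) = k + 1}
    {\<sigma> \<in> network_complex. k simplex \<sigma>}"
proof (rule bij_betw_imageI)
  show "inj_on split_cell {S. circular_split_system S \<and> int (card S) = k + 1}"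
    using inj_convex_hull_axis unfolding split_cell_def inj_on_def by blast
  show "split_cell ` {S. circular_split_system S \<and> int (card S) = k + 1} =
      {\<sigma> \<in> network_complex. k simplex \<sigma>}"
    by (auto simp: network_complex_def simplex_split_cell_iff)
qed

lemma card_circular_split_system_le:
  assumes "circular_split_system S" "3 \<le> CARD('a::finite)"
  shows "2 * card (S :: 'a set set set) \<le> CARD('a) * (CARD('a) - 3)"
proof -
  obtain xs where "circular_ordering UNIV xs" "S \<subseteq> circular_splits xs"
    using assms(1) unfolding circular_split_system_iff by blast
  then show ?thesis
    using card_circular_splits[of xs] card_mono[of "circular_splits xs" S] assms(2)
    by (metis finite mult_le_mono2 order_trans)
qed

section \<open>Connectedness\<close>

lemma connected_Union_through_point:
  fixes \<A> :: "'a::topological_space set set"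
  assumes "\<And>A. A \<in> \<A> \<Longrightarrow> connected A"
    and "\<And>A. A \<in> \<A> \<Longrightarrow> \<exists>B \<in> \<A>. p \<in> B \<and> A \<inter> B \<noteq> {}"
  shows "connected (\<Union>\<A>)"
proof -
  let ?\<B> = "{A \<union> B | A B. A \<in> \<A> \<and> B \<in> \<A> \<and> p \<in> B \<and> A \<inter> B \<noteq> {}}"
  have "\<Union>\<A> \<subseteq> \<Union>?\<B>"
  proof
    fix x assume "x \<in> \<Union>\<A>"
    then obtain A where A: "A \<in> \<A>" "x \<in> A"
      by blast
    moreover obtain B where "B \<in> \<A>" "p \<in> B" "A \<inter> B \<noteq> {}"
      using assms(2)[OF A(1)] by blast
    ultimately show "x \<in> \<Union>?\<B>"
      by blast
  qed
  then have "\<Union>?\<B> = \<Union>\<A>"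
    by blast
  moreover have "connected (\<Union>?\<B>)"
  proof (rule connected_Union)
    fix C assume "C \<in> ?\<B>"
    then show "connected C"
      using assms(1) connected_Un by blast
  next
    show "\<Inter>?\<B> \<noteq> {}"
      by blast
  qed
  ultimately show ?thesis
    by simp
qed

lemma adjacent_split_in_circular_splits:
  assumes "circular_ordering UNIV xs" "4 \<le> CARD('a::finite)" "p < length (xs :: 'a list)"
  shows "split_of {xs ! p, xs ! (Suc p mod length xs)} \<in> circular_splits xs"
  using split_of_cyclic_interval_in_circular_splits[OF assms(1), of 2 p] assms
  by (simp add: cyclic_interval_two length_circular_ordering)

lemma chamber_meets_chamber_through_split:
  fixes a b :: "'a::finite"
  assumes ordering: "circular_ordering UNIV xs" and n: "4 \<le> CARD('a)" and "a \<noteq> b"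
  shows "\<exists>zs. circular_ordering UNIV zs \<and> axis (split_of {a, b}) 1 \<in> split_cell (circular_splits zs) \<and>
    split_cell (circular_splits xs) \<inter> split_cell (circular_splits zs) \<noteq> {}"
proof -
  obtain p where p: "p < length xs" "xs ! p = a"
    using ordering unfolding circular_ordering_def by (metis UNIV_I in_set_conv_nth)
  define y where "y = xs ! (Suc p mod length xs)"
  have ay: "split_of {a, y} \<in> circular_splits xs"
    unfolding y_def p(2)[symmetric] using adjacent_split_in_circular_splits[OF ordering n p(1)] .
  then have "y \<noteq> a"
    by (auto simp: circular_splits_def nontrivial_split_split_of)
  show ?thesis
  proof (cases "y = b")
    case True
    then have "axis (split_of {a, b}) 1 \<in> split_cell (circular_splits xs)"
      using ay by (simp add: axis_in_split_cell)
    then show ?thesis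
      using ordering by blast
  next
    case False
    obtain rest where rest: "set rest = UNIV - {a, b, y}" "distinct rest"
      using finite_distinct_list[of "UNIV - {a, b, y}"] by auto
    define zs where "zs = [b, a, y] @ rest"
    have zs: "circular_ordering UNIV zs"
      using rest \<open>a \<noteq> b\<close> \<open>y \<noteq> a\<close> False by (auto simp: circular_ordering_def zs_def)
    then have "Suc 0 mod length zs = 1" "Suc 1 mod length zs = 2"
      using n by (simp_all add: length_circular_ordering)
    then have "split_of {b, a} \<in> circular_splits zs" "split_of {a, y} \<in> circular_splits zs"
      using adjacent_split_in_circular_splits[OF zs n, of 0] adjacent_split_in_circular_splits[OF zs n, of 1]
      by (simp_all add: zs_def)
    then have "axis (split_of {a, b}) 1 \<in> split_cell (circular_splits zs)"
      and "axis (split_of {a, y}) 1 \<in> split_cell (circular_splits xs) \<inter> split_cell (circular_splits zs)"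
      using ay by (simp_all add: axis_in_split_cell insert_commute)
    then show ?thesis
      using zs by blast
  qed
qed

lemma connected_network_space:
  assumes "4 \<le> CARD('a::finite)"
  shows "connected (network_space :: (real ^ 'a set set) set)"
proof -
  have "\<not> CARD('a) \<le> Suc 0"
    using assms by simp
  then obtain a b :: 'a where "a \<noteq> b"
    using card_le_Suc0_iff_eq[of "UNIV :: 'a set"] by auto
  let ?\<C> = "(\<lambda>xs. split_cell (circular_splits xs)) ` {xs :: 'a list. circular_ordering UNIV xs}"
  have "connected A" if "A \<in> ?\<C>" for A
    using that unfolding split_cell_def by (auto intro: convex_connected)
  moreover have "\<exists>B \<in> ?\<C>. axis (split_of {a, b}) 1 \<in> B \<and> A \<inter> B \<noteq> {}" if "A \<in> ?\<C>" for A
    using that chamber_meets_chamber_through_split[OF _ assms \<open>a \<noteq> b\<close>] by blast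
  ultimately have "connected (\<Union>?\<C>)"
    by (rule connected_Union_through_point)
  then show ?thesis
    by (simp add: network_space_eq_Union_chambers)
qed

lemma ex_top_simplex_network_complex:
  assumes "3 \<le> CARD('a::finite)"
  shows "\<exists>\<sigma> \<in> (network_complex :: (real ^ 'a set set) set set).
    (int CARD('a) * (int CARD('a) - 3) div 2 - 1) simplex \<sigma>"
proof -
  obtain xs :: "'a list" where xs: "circular_ordering UNIV xs"
    using ex_circular_ordering by blast
  have "2 * int (card (circular_splits xs)) = int CARD('a) * (int CARD('a) - 3)"
    using card_circular_splits[OF xs assms] assms by (metis of_nat_diff of_nat_mult of_nat_numeral)
  then have "(int CARD('a) * (int CARD('a) - 3) div 2 - 1) simplex split_cell (circular_splits xs)"
    unfolding simplex_split_cell_iff by linarith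
  then show ?thesis
    using circular_split_system_circular_splits[OF xs] unfolding network_complex_def by blast
qed

lemma simplex_network_complex_dim_le:
  assumes "3 \<le> CARD('a::finite)" "\<sigma> \<in> (network_complex :: (real ^ 'a set set) set set)"
    "k simplex \<sigma>"
  shows "k \<le> int CARD('a) * (int CARD('a) - 3) div 2 - 1"
proof -
  obtain S where S: "circular_split_system S" "\<sigma> = split_cell S"
    using assms(2) unfolding network_complex_def by blast
  have "2 * int (card S) \<le> int CARD('a) * (int CARD('a) - 3)"
    using card_circular_split_system_le[OF S(1) assms(1)] assms(1)
    by (metis of_nat_diff of_nat_le_iff of_nat_mult of_nat_numeral)
  then show ?thesis
    using assms(3) unfolding S(2) simplex_split_cell_iff by linarith
qed

theorem proposition5:
  assumes "CARD('a::finite) \<ge> 4"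
  shows "simplicial_complex (network_complex :: (real ^ ('a set set)) set set)
    \<and> \<Union>(network_complex :: (real ^ ('a set set)) set set) = network_space
    \<and> connected (network_space :: (real ^ ('a set set)) set)
    \<and> (\<exists>\<sigma>\<in>(network_complex :: (real ^ ('a set set)) set set).
          (int CARD('a) * (int CARD('a) - 3) div 2 - 1) simplex \<sigma>)
    \<and> (\<forall>\<sigma>\<in>(network_complex :: (real ^ ('a set set)) set set). \<forall>k. k simplex \<sigma> \<longrightarrow>
          k \<le> int CARD('a) * (int CARD('a) - 3) div 2 - 1)
    \<and> (\<forall>k::int. k \<ge> -1 \<longrightarrow>
          bij_betw split_cell {S :: 'a set set set. circular_split_system S \<and> int (card S) = k + 1}
            {\<sigma> \<in> (network_complex :: (real ^ ('a set set)) set set). k simplex \<sigma>})"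
proof -
  have "3 \<le> CARD('a)"
    using assms by simp
  then show ?thesis
    using simplicial_complex_network_complex Union_network_complex connected_network_space[OF assms]
      ex_top_simplex_network_complex simplex_network_complex_dim_le bij_betw_split_cell_simplices
    by blast
qed

end
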